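(* Let $\mathbb D$ be a commutative ring with identity. For every integer $n\ge1$, $$TS\mathcal A_n\big/\bigl(TS\mathcal A_n\cap\gamma_2(TS\mathcal R_n)\bigr)\cong TS\mathcal A_1=\left\{\begin{pmatrix}1&0\\ \alpha&1\end{pmatrix}:\alpha\in\mathbb D\right\}\cong \mathbb D,$$ and, regarding $S\mathcal R$ as an abstract group, $$S\mathcal A\big/\bigl(S\mathcal A\cap\gamma_2(S\mathcal R)\bigr)=S\mathcal A/\mathcal A_1\cong TS\mathcal A_1\cong\mathbb D,$$ where $\mathbb D$ denotes the additive group of the ring.
   Context: For a commutative ring $\mathbb D$ with identity, the Riordan group $\mathcal R(\mathbb D)$ consists of pairs $(g,f)$ of formal power series $g=\sum_{k\ge0}g_kt^k$, $f=\sum_{k\ge1}f_kt^k$ in $\mathbb D[[t]]$ with $g_0,f_1$ units, identified with the lower triangular matrices $(d_{n,k})$, $d_{n,k}=[t^n]g f^k$; the product is $(g_1,f_1)(g_2,f_2)=(g_1\cdot(g_2\circ f_1),\,f_2\circ f_1)$. $S\mathcal R=S\mathcal R(\mathbb D)$ is the subgroup with $g_0=1$, $f_1=1$. $S\mathcal A$ is the S-Appell subgroup $\{(g,t): g_0=1\}$, and $\mathcal A_1=\{(g,t): g\equiv 1 \pmod{t^2}\}$. For $n\ge0$, $TS\mathcal R_n$ and $TS\mathcal A_n$ are the groups of $(n+1)\times(n+1)$ upper-left truncations $(d_{i,j})_{0\le i,j\le n}$ of elements of $S\mathcal R$ and $S\mathcal A$ respectively. $\gamma_2(G)$ is the (abstract)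 commutator subgroup of $G$. *)

theory Defs
  imports "HOL-Computational_Algebra.Formal_Power_Series" "HOL-Algebra.Algebra"
begin

definition SR_carrier :: "('a::comm_ring_1 fps \<times> 'a fps) set" where
  "SR_carrier = {(g, f). fps_nth g 0 = 1 \<and> fps_nth f 0 = 0 \<and> fps_nth f 1 = 1}"

definition riordan_mult :: "'a::comm_ring_1 fps \<times> 'a fps \<Rightarrow> 'a fps \<times> 'a fps \<Rightarrow> 'a fps \<times> 'a fps" where
  "riordan_mult p q = (fst p * (fst q oo snd p), snd q oo snd p)"

definition SR :: "('a::comm_ring_1 fps \<times> 'a fps) monoid" where
  "SR = \<lparr>carrier = SR_carrier, mult = riordan_mult, one = (1, fps_X)\<rparr>"

definition SA_carrier :: "('a::comm_ring_1 fps \<times> 'a fps) set" where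
  "SA_carrier = {(g, fps_X) | g. fps_nth g 0 = 1}"

definition SA :: "('a::comm_ring_1 fps \<times> 'a fps) monoid" where
  "SA = SR\<lparr>carrier := SA_carrier\<rparr>"

definition A1_carrier :: "('a::comm_ring_1 fps \<times> 'a fps) set" where
  "A1_carrier = {(g, fps_X) | g. fps_nth g 0 = 1 \<and> fps_nth g 1 = 0}"

definition riordan_mat :: "'a::comm_ring_1 fps \<times> 'a fps \<Rightarrow> nat \<Rightarrow> nat \<Rightarrow> 'a" where
  "riordan_mat p i k = fps_nth (fst p * snd p ^ k) i"

text \<open>(n+1)x(n+1) matrices with indices 0..n are represented as functions
  nat => nat => 'a which vanish outside {0..n} x {0..n}.\<close>
definition trunc_mat :: "nat \<Rightarrow> (nat \<Rightarrow> nat \<Rightarrow> 'a::zero) \<Rightarrow> nat \<Rightarrow> nat \<Rightarrow> 'a" where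
  "trunc_mat n M i j = (if i \<le> n \<and> j \<le> n then M i j else 0)"

definition mat_mult_n :: "nat \<Rightarrow> (nat \<Rightarrow> nat \<Rightarrow> 'a::comm_ring_1) \<Rightarrow> (nat \<Rightarrow> nat \<Rightarrow> 'a) \<Rightarrow> nat \<Rightarrow> nat \<Rightarrow> 'a" where
  "mat_mult_n n A B i j = (if i \<le> n \<and> j \<le> n then (\<Sum>k\<le>n. A i k * B k j) else 0)"

definition mat_one_n :: "nat \<Rightarrow> nat \<Rightarrow> nat \<Rightarrow> 'a::comm_ring_1" where
  "mat_one_n n i j = (if i = j \<and> i \<le> n then 1 else 0)"

definition TSR :: "nat \<Rightarrow> (nat \<Rightarrow> nat \<Rightarrow> 'a::comm_ring_1) monoid" where
  "TSR n = \<lparr>carrier = {trunc_mat n (riordan_mat p) | p. p \<in> SR_carrier},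
            mult = mat_mult_n n, one = mat_one_n n\<rparr>"

definition TSA :: "nat \<Rightarrow> (nat \<Rightarrow> nat \<Rightarrow> 'a::comm_ring_1) monoid" where
  "TSA n = (TSR n)\<lparr>carrier := {trunc_mat n (riordan_mat p) | p. p \<in> SA_carrier}\<rparr>"

definition additive_group :: "'a::comm_ring_1 monoid" where
  "additive_group = \<lparr>carrier = UNIV, mult = (+), one = 0\<rparr>"

abbreviation gamma2 :: "('a, 'b) monoid_scheme \<Rightarrow> 'a set" where
  "gamma2 G \<equiv> derived G (carrier G)"

end

theory Submission
  imports Defs
begin

text \<open>The coefficient map \<open>(g, f) \<mapsto> [t] g\<close> is a homomorphism from \<open>S\<R>\<close> onto the
  additive group of \<open>\<D>\<close>, since \<open>[t] (g\<^sub>1 (g\<^sub>2 \<circ> f\<^sub>1)) = [t] g\<^sub>1 + [t] g\<^sub>2\<close>;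
  so \<open>\<gamma>\<^sub>2(S\<R>)\<close> lies in its kernel. Conversely every \<open>(h, t)\<close> with \<open>h \<equiv> 1 mod t\<^sup>2\<close>
  is a single commutator in \<open>S\<R>\<close>. Hence \<open>S\<A> \<inter> \<gamma>\<^sub>2(S\<R>) = \<A>\<^sub>1\<close> and \<open>S\<A>/\<A>\<^sub>1 \<cong> \<D>\<close>.
  Truncating Riordan matrices is a homomorphism \<open>S\<R> \<rightarrow> TS\<R>\<^sub>n\<close>, so \<open>\<gamma>\<^sub>2(TS\<R>\<^sub>n)\<close> is the
  image of \<open>\<gamma>\<^sub>2(S\<R>)\<close>, and for \<open>n \<ge> 1\<close> the entry \<open>(1, 0) = [t] g\<close> plays the same role
  for \<open>TS\<A>\<^sub>n\<close>.\<close>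

unbundle fps_syntax

section \<open>Composition of formal power series over a commutative ring\<close>

lemma fps_compose_nth_upto:
  fixes a c :: "'a::comm_ring_1 fps"
  assumes "c $ 0 = 0" and "n \<le> N"
  shows "(a oo c) $ n = (\<Sum>i=0..N. a $ i * (c ^ i) $ n)"
  unfolding fps_compose_nth
  by (rule sum.mono_neutral_left) (use assms startsby_zero_power_prefix[OF assms(1)] in auto)

text \<open>The library proves the following three laws only over integral domains.\<close>

lemma fps_compose_mult_distrib':
  fixes a b c :: "'a::comm_ring_1 fps"
  assumes c0: "c $ 0 = 0"
  shows "(a * b) oo c = (a oo c) * (b oo c)"
proof (rule fps_ext)
  fix n
  have "((a oo c) * (b oo c)) $ n
      = (\<Sum>m=0..n. (\<Sum>i=0..n. a $ i * (c ^ i) $ m) * (\<Sum>j=0..n. b $ j * (c ^ j) $ (n - m)))"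
    unfolding fps_mult_nth
    by (intro sum.cong refl arg_cong2[where f = "(*)"] fps_compose_nth_upto[OF c0]) auto
  also have "\<dots> = (\<Sum>i=0..n. \<Sum>j=0..n. a $ i * b $ j * (c ^ i * c ^ j) $ n)"
  proof -
    have "(\<Sum>m=0..n. (\<Sum>i=0..n. a $ i * (c ^ i) $ m) * (\<Sum>j=0..n. b $ j * (c ^ j) $ (n - m)))
        = (\<Sum>m=0..n. \<Sum>i=0..n. \<Sum>j=0..n. a $ i * b $ j * ((c ^ i) $ m * (c ^ j) $ (n - m)))"
      by (simp add: sum_product mult_ac)
    also have "\<dots> = (\<Sum>i=0..n. \<Sum>j=0..n. \<Sum>m=0..n. a $ i * b $ j * ((c ^ i) $ m * (c ^ j) $ (n - m)))"
      by (subst sum.swap) (rule sum.cong[OF refl], rule sum.swap)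
    finally show ?thesis
      by (simp add: fps_mult_nth sum_distrib_left)
  qed
  also have "\<dots> = (\<Sum>(i, j) \<in> {(i, j). i + j \<le> n}. a $ i * b $ j * (c ^ (i + j)) $ n)"
  proof -
    have vanish: "a $ i * b $ j * (c ^ i * c ^ j) $ n = 0" if "\<not> i + j \<le> n" for i j
      using startsby_zero_power_prefix[OF c0, of "i + j"] that by (simp add: power_add)
    have "(\<Sum>i=0..n. \<Sum>j=0..n. a $ i * b $ j * (c ^ i * c ^ j) $ n)
        = (\<Sum>(i, j) \<in> {0..n} \<times> {0..n}. a $ i * b $ j * (c ^ i * c ^ j) $ n)"
      by (rule sum.cartesian_product)
    also have "\<dots> = (\<Sum>(i, j) \<in> {(i, j). i + j \<le> n}. a $ i * b $ j * (c ^ i * c ^ j) $ n)"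
      by (rule sum.mono_neutral_right) (use vanish in fastforce)+
    finally show ?thesis
      by (simp add: power_add)
  qed
  also have "\<dots> = (\<Sum>s=0..n. \<Sum>i=0..s. a $ i * b $ (s - i) * (c ^ s) $ n)"
    by (rule sum_pair_less_iff)
  also have "\<dots> = ((a * b) oo c) $ n"
    by (simp add: fps_compose_nth fps_mult_nth sum_distrib_right)
  finally show "((a * b) oo c) $ n = ((a oo c) * (b oo c)) $ n" ..
qed

lemma fps_compose_power':
  fixes a c :: "'a::comm_ring_1 fps"
  assumes "c $ 0 = 0"
  shows "(a oo c) ^ n = a ^ n oo c"
  by (induction n) (simp_all add: fps_compose_mult_distrib'[OF assms])

lemma fps_compose_assoc':
  fixes a b c :: "'a::comm_ring_1 fps"
  assumes b0: "b $ 0 = 0" and c0: "c $ 0 = 0"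
  shows "a oo (b oo c) = (a oo b) oo c"
proof (rule fps_ext)
  fix n
  have "(a oo (b oo c)) $ n = (\<Sum>i=0..n. \<Sum>j=0..n. a $ i * (b ^ i) $ j * (c ^ j) $ n)"
    by (simp add: fps_compose_nth fps_compose_power'[OF c0] sum_distrib_left mult.assoc)
  also have "\<dots> = (\<Sum>j=0..n. \<Sum>i=0..n. a $ i * (b ^ i) $ j * (c ^ j) $ n)"
    by (rule sum.swap)
  also have "\<dots> = (\<Sum>j=0..n. (a oo b) $ j * (c ^ j) $ n)"
    by (intro sum.cong refl) (simp add: fps_compose_nth_upto[OF b0] sum_distrib_right)
  also have "\<dots> = ((a oo b) oo c) $ n"
    by (simp add: fps_compose_nth)
  finally show "(a oo (b oo c)) $ n = ((a oo b) oo c) $ n" .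
qed

lemma fps_compose_nth_Suc_0: "(g oo f) $ Suc 0 = g $ Suc 0 * (f :: 'a::comm_ring_1 fps) $ Suc 0"
  by (simp add: fps_compose_nth)

lemma fps_mult_compose_nth_upto:
  fixes a b c :: "'a::comm_ring_1 fps"
  assumes b0: "b $ 0 = 0" and "i \<le> N"
  shows "(c * (a oo b)) $ i = (\<Sum>j=0..N. a $ j * (c * b ^ j) $ i)"
proof -
  have "(a oo b) $ (i - m) = (\<Sum>j=0..N. a $ j * (b ^ j) $ (i - m))" for m
    using assms(2) by (intro fps_compose_nth_upto[OF b0]) auto
  then have "(c * (a oo b)) $ i = (\<Sum>m=0..i. \<Sum>j=0..N. c $ m * (a $ j * (b ^ j) $ (i - m)))"
    by (simp add: fps_mult_nth sum_distrib_left)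
  also have "\<dots> = (\<Sum>j=0..N. \<Sum>m=0..i. a $ j * (c $ m * (b ^ j) $ (i - m)))"
    by (subst sum.swap) (simp add: mult.left_commute)
  also have "\<dots> = (\<Sum>j=0..N. a $ j * (c * b ^ j) $ i)"
    by (simp add: fps_mult_nth sum_distrib_left)
  finally show ?thesis .
qed

text \<open>Coefficients of the compositional left inverse of a series \<open>f\<close> with \<open>f $ 0 = 0\<close>
  and \<open>f $ 1 = 1\<close>; unlike the library's \<open>fps_inv\<close>, this needs no field.\<close>
function left_compinv_coeff :: "'a::comm_ring_1 fps \<Rightarrow> nat \<Rightarrow> 'a" where
  "left_compinv_coeff f n = fps_X $ n - (\<Sum>i<n. left_compinv_coeff f i * (f ^ i) $ n)"
  by auto
termination by (relation "measure snd") auto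

declare left_compinv_coeff.simps [simp del]

lemma fps_left_compinv:
  fixes f :: "'a::comm_ring_1 fps"
  assumes f0: "f $ 0 = 0" and f1: "f $ 1 = 1"
  defines "g \<equiv> Abs_fps (left_compinv_coeff f)"
  shows "g oo f = fps_X" and "g $ 0 = 0" and "g $ 1 = 1"
proof -
  show "g $ 0 = 0"
    by (simp add: g_def left_compinv_coeff.simps[of f 0])
  show "g $ 1 = 1"
    by (simp add: g_def left_compinv_coeff.simps[of f "Suc 0"] left_compinv_coeff.simps[of f 0])
  show "g oo f = fps_X"
  proof (rule fps_ext)
    fix n
    have "(f ^ n) $ n = 1"
      using startsby_zero_power_nth_same[OF f0, of n] f1 by simp
    then have "(g oo f) $ n = (\<Sum>i<n. g $ i * (f ^ i) $ n) + g $ n"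
      by (simp add: fps_compose_nth atLeast0AtMost lessThan_Suc_atMost[symmetric])
    also have "\<dots> = fps_X $ n"
      by (simp add: g_def left_compinv_coeff.simps[of f n])
    finally show "(g oo f) $ n = fps_X $ n" .
  qed
qed

lemma fps_right_compinv_exists:
  fixes f :: "'a::comm_ring_1 fps"
  assumes f0: "f $ 0 = 0" and f1: "f $ 1 = 1"
  obtains g where "g $ 0 = 0" and "g $ 1 = 1" and "f oo g = fps_X"
proof -
  define g where "g = Abs_fps (left_compinv_coeff f)"
  define h where "h = Abs_fps (left_compinv_coeff g)"
  have g: "g oo f = fps_X" "g $ 0 = 0" "g $ 1 = 1"
    using fps_left_compinv[OF f0 f1] by (simp_all add: g_def)
  have h: "h oo g = fps_X"
    using fps_left_compinv[OF g(2,3)] by (simp add: h_def)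
  have "h = h oo (g oo f)"
    by (simp add: g)
  also have "\<dots> = f"
    by (simp add: fps_compose_assoc'[OF g(2) f0] h f0)
  finally have "f oo g = fps_X"
    using h by simp
  with g show ?thesis
    using that by blast
qed

lemma fps_unit_left_inverse:
  fixes u :: "'a::comm_ring_1 fps"
  assumes "u $ 0 = 1"
  obtains v where "v $ 0 = 1" and "v * u = 1"
proof
  show "fps_right_inverse u 1 * u = 1"
    using fps_right_inverse[of u 1] assms by (simp add: mult.commute)
qed simp

section \<open>The Riordan group and its Appell subgroup\<close>

lemma SR_carrier_iff: "p \<in> SR_carrier \<longleftrightarrow> fst p $ 0 = 1 \<and> snd p $ 0 = 0 \<and> snd p $ 1 = 1"
  by (cases p) (simp add: SR_carrier_def)

lemma SR_simps [simp]: "carrier SR = SR_carrier" "mult SR = riordan_mult" "one SR = (1, fps_X)"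
  by (simp_all add: SR_def)

lemma riordan_mult_closed:
  "p \<in> SR_carrier \<Longrightarrow> q \<in> SR_carrier \<Longrightarrow> riordan_mult p q \<in> SR_carrier"
  by (simp add: SR_carrier_iff riordan_mult_def fps_compose_nth_Suc_0)

lemma riordan_mult_assoc:
  assumes "p \<in> SR_carrier" and "q \<in> SR_carrier"
  shows "riordan_mult (riordan_mult p q) r = riordan_mult p (riordan_mult q r)"
proof -
  have "snd p $ 0 = 0" and "snd q $ 0 = 0"
    using assms by (simp_all add: SR_carrier_iff)
  then show ?thesis
    by (simp add: riordan_mult_def fps_compose_mult_distrib' fps_compose_assoc' mult.assoc)
qed

lemma riordan_left_inverse_exists:
  assumes "p \<in> SR_carrier"
  shows "\<exists>q \<in> SR_carrier. riordan_mult q p = (1, fps_X)"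
proof -
  obtain g f where p: "p = (g, f)" and g0: "g $ 0 = 1" and f0: "f $ 0 = 0" and f1: "f $ 1 = 1"
    using assms by (cases p) (simp add: SR_carrier_iff)
  obtain f' where f': "f' $ 0 = 0" "f' $ 1 = 1" "f oo f' = fps_X"
    using fps_right_compinv_exists[OF f0 f1] by blast
  obtain g' where g': "g' $ 0 = 1" "g' * (g oo f') = 1"
    using fps_unit_left_inverse[of "g oo f'"] g0 by auto
  show ?thesis
    using f' g' by (intro bexI[of _ "(g', f')"]) (simp_all add: p riordan_mult_def SR_carrier_iff)
qed

lemma group_SR: "group (SR :: ('a::comm_ring_1 fps \<times> 'a fps) monoid)"
proof (rule groupI)
  show "\<one>\<^bsub>SR\<^esub> \<otimes>\<^bsub>SR\<^esub> p = p" for p :: "'a fps \<times> 'a fps"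
    by (cases p) (simp add: riordan_mult_def)
qed (auto simp: riordan_mult_closed riordan_mult_assoc riordan_left_inverse_exists,
     simp add: SR_carrier_iff)

lemma additive_group_simps [simp]:
  "carrier additive_group = UNIV" "mult additive_group = (+)" "one additive_group = 0"
  by (simp_all add: additive_group_def)

lemma group_additive_group: "group (additive_group :: 'a::comm_ring_1 monoid)"
proof (rule groupI)
  show "\<exists>y \<in> carrier additive_group. y \<otimes>\<^bsub>additive_group\<^esub> x = \<one>\<^bsub>additive_group\<^esub>" for x :: 'a
    by (intro bexI[of _ "- x"]) simp_all
qed (simp_all add: add.assoc)

lemma comm_group_additive_group: "comm_group (additive_group :: 'a::comm_ring_1 monoid)"
  by (rule group.group_comm_groupI[OF group_additive_group]) (simp add: add.commute)

lemma (in group_hom) derived_subset_kernel: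
  assumes "comm_group H"
  shows "derived G (carrier G) \<subseteq> kernel G H h"
proof -
  have "h ` derived G (carrier G) = derived H (h ` carrier G)"
    by (simp add: derived_img)
  also have "\<dots> \<subseteq> derived H (carrier H)"
    by (intro H.mono_derived) auto
  also have "\<dots> = {\<one>\<^bsub>H\<^esub>}"
    by (simp add: comm_group.derived_eq_singleton[OF assms])
  finally show ?thesis
    using G.derived_in_carrier[of "carrier G"] unfolding kernel_def by auto
qed

lemma riordan_coeff1_hom: "(\<lambda>p. fst p $ 1) \<in> hom SR (additive_group :: 'a::comm_ring_1 monoid)"
  by (auto simp: hom_def riordan_mult_def SR_carrier_iff fps_compose_nth_Suc_0 add.commute)

lemma group_hom_riordan_coeff1:
  "group_hom SR (additive_group :: 'a::comm_ring_1 monoid) (\<lambda>p. fst p $ 1)"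
  by (intro group_hom.intro group_hom_axioms.intro group_SR group_additive_group
      riordan_coeff1_hom)

lemma derived_SR_coeff1:
  "p \<in> gamma2 (SR :: ('a::comm_ring_1 fps \<times> 'a fps) monoid) \<Longrightarrow> fst p $ 1 = 0"
  using group_hom.derived_subset_kernel[OF group_hom_riordan_coeff1 comm_group_additive_group]
  by (auto simp: kernel_def)

lemma SA_carrier_iff: "p \<in> SA_carrier \<longleftrightarrow> fst p $ 0 = 1 \<and> snd p = fps_X"
  by (cases p) (auto simp: SA_carrier_def)

lemma A1_carrier_iff: "p \<in> A1_carrier \<longleftrightarrow> fst p $ 0 = 1 \<and> fst p $ 1 = 0 \<and> snd p = fps_X"
  by (cases p) (auto simp: A1_carrier_def)

lemma SA_simps [simp]: "carrier SA = SA_carrier" "mult SA = riordan_mult" "one SA = (1, fps_X)"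
  by (simp_all add: SA_def)

lemma SA_subset_SR: "SA_carrier \<subseteq> SR_carrier"
  by (auto simp: SA_carrier_iff SR_carrier_iff)

lemma SA_coeff1_surj: "(\<lambda>p. fst p $ 1) ` SA_carrier = (UNIV :: 'a::comm_ring_1 set)"
proof -
  have "a \<in> (\<lambda>p. fst p $ 1) ` SA_carrier" for a :: 'a
    by (rule image_eqI[of _ _ "(1 + fps_const a * fps_X, fps_X)"]) (simp_all add: SA_carrier_iff)
  then show ?thesis
    by blast
qed

text \<open>\<open>(h, t)\<close> is the commutator of \<open>x = (1, f)\<close> and \<open>y = (1 + t, t)\<close> with
  \<open>f = t + (h - 1)(1 + t)\<close>, because \<open>x y = (1 + f, f) = (h, t) (y x)\<close>.\<close>
lemma A1_subset_derived_SR: "A1_carrier \<subseteq> gamma2 (SR :: ('a::comm_ring_1 fps \<times> 'a fps) monoid)"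
proof
  interpret group "SR :: ('a fps \<times> 'a fps) monoid"
    by (rule group_SR)
  fix z :: "'a fps \<times> 'a fps"
  assume "z \<in> A1_carrier"
  then obtain h where z: "z = (h, fps_X)" and h0: "h $ 0 = 1" and h1: "h $ 1 = 0"
    by (cases z) (auto simp: A1_carrier_iff)
  define f where "f = fps_X + (h - 1) * (1 + fps_X)"
  define x where "x = (1 :: 'a fps, f)"
  define y where "y = (1 + fps_X :: 'a fps, fps_X :: 'a fps)"
  have f0: "f $ 0 = 0"
    using h0 by (simp add: f_def)
  have x: "x \<in> carrier SR" and y: "y \<in> carrier SR" and "z \<in> carrier SR"
    using f0 h0 h1 by (simp_all add: x_def y_def z f_def SR_carrier_iff fps_mult_nth_1)
  have "x \<otimes>\<^bsub>SR\<^esub> y = (1 + f, f)"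
    by (simp add: x_def y_def riordan_mult_def fps_compose_add_distrib f0)
  also have "\<dots> = z \<otimes>\<^bsub>SR\<^esub> (y \<otimes>\<^bsub>SR\<^esub> x)"
    by (simp add: x_def y_def z riordan_mult_def fps_compose_add_distrib f_def algebra_simps)
  finally have "z = x \<otimes>\<^bsub>SR\<^esub> y \<otimes>\<^bsub>SR\<^esub> inv\<^bsub>SR\<^esub> x \<otimes>\<^bsub>SR\<^esub> inv\<^bsub>SR\<^esub> y"
    using x y \<open>z \<in> carrier SR\<close> by (simp add: m_assoc del: SR_simps)
  with x y have "z \<in> derived_set SR (carrier SR)"
    by blast
  then show "z \<in> gamma2 SR"
    unfolding derived_def by (rule generate.incl)
qed

lemma SA_inter_derived_SR:
  "carrier (SA :: ('a::comm_ring_1 fps \<times> 'a fps) monoid) \<inter> gamma2 SR = A1_carrier"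
  using derived_SR_coeff1 A1_subset_derived_SR
  by (fastforce simp: SA_carrier_iff A1_carrier_iff)

lemma subgroup_SA: "subgroup SA_carrier (SR :: ('a::comm_ring_1 fps \<times> 'a fps) monoid)"
proof -
  interpret group "SR :: ('a fps \<times> 'a fps) monoid"
    by (rule group_SR)
  show ?thesis
  proof (rule subgroupI)
    fix p :: "'a fps \<times> 'a fps"
    assume "p \<in> SA_carrier"
    then obtain g where p: "p = (g, fps_X)" and g0: "g $ 0 = 1"
      by (cases p) (auto simp: SA_carrier_iff)
    obtain g' where g': "g' $ 0 = 1" "g' * g = 1"
      using fps_unit_left_inverse[OF g0] by blast
    have "inv\<^bsub>SR\<^esub> p = (g', fps_X)"
      using g0 g' by (intro inv_equality) (simp_all add: p riordan_mult_def SR_carrier_iff)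
    then show "inv\<^bsub>SR\<^esub> p \<in> SA_carrier"
      using g' by (simp add: SA_carrier_iff)
  next
    show "(SA_carrier :: ('a fps \<times> 'a fps) set) \<noteq> {}"
      using SA_carrier_iff[of "(1, fps_X) :: 'a fps \<times> 'a fps"] by auto
  qed (auto simp: SA_subset_SR SA_carrier_iff riordan_mult_def)
qed

lemma group_SA: "group (SA :: ('a::comm_ring_1 fps \<times> 'a fps) monoid)"
  unfolding SA_def by (rule subgroup.subgroup_is_group[OF subgroup_SA group_SR])

lemma SA_Mod_A1_iso_additive_group:
  "(SA :: ('a::comm_ring_1 fps \<times> 'a fps) monoid) Mod A1_carrier \<cong> (additive_group :: 'a monoid)"
proof -
  interpret group_hom "SA :: ('a fps \<times> 'a fps) monoid" "additive_group :: 'a monoid" "\<lambda>p. fst p $ 1"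
    using group_hom_riordan_coeff1 group_SA SA_subset_SR
    by (auto simp: group_hom_def group_hom_axioms_def hom_def)
  have "kernel SA (additive_group :: 'a monoid) (\<lambda>p. fst p $ 1) = A1_carrier"
    by (auto simp: kernel_def SA_carrier_iff A1_carrier_iff)
  then show ?thesis
    using FactGroup_iso SA_coeff1_surj by fastforce
qed

section \<open>Truncated Riordan matrices\<close>

abbreviation riordan_trunc :: "nat \<Rightarrow> 'a::comm_ring_1 fps \<times> 'a fps \<Rightarrow> nat \<Rightarrow> nat \<Rightarrow> 'a" where
  "riordan_trunc n p \<equiv> trunc_mat n (riordan_mat p)"

lemma riordan_trunc_mult:
  assumes "p \<in> SR_carrier"
  shows "riordan_trunc n (riordan_mult p q) = mat_mult_n n (riordan_trunc n p) (riordan_trunc n q)"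
proof (intro ext)
  fix i k
  obtain g1 f1 g2 f2 where p: "p = (g1, f1)" and q: "q = (g2, f2)"
    by (cases p, cases q)
  have f0: "f1 $ 0 = 0"
    using assms p by (simp add: SR_carrier_iff)
  show "riordan_trunc n (riordan_mult p q) i k = mat_mult_n n (riordan_trunc n p) (riordan_trunc n q) i k"
  proof (cases "i \<le> n \<and> k \<le> n")
    case True
    have "riordan_trunc n (riordan_mult p q) i k = (g1 * ((g2 * f2 ^ k) oo f1)) $ i"
      using True by (simp add: p q trunc_mat_def riordan_mat_def riordan_mult_def
          fps_compose_power'[OF f0] fps_compose_mult_distrib'[OF f0] mult.assoc)
    also have "\<dots> = (\<Sum>j=0..n. (g2 * f2 ^ k) $ j * (g1 * f1 ^ j) $ i)"
      using True by (simp add: fps_mult_compose_nth_upto[OF f0])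
    also have "\<dots> = mat_mult_n n (riordan_trunc n p) (riordan_trunc n q) i k"
      using True by (auto simp: p q mat_mult_n_def trunc_mat_def riordan_mat_def atLeast0AtMost
          mult.commute intro!: sum.cong)
    finally show ?thesis .
  qed (auto simp: trunc_mat_def mat_mult_n_def)
qed

lemma riordan_trunc_one: "riordan_trunc n (1, fps_X) = mat_one_n n"
  by (intro ext) (auto simp: trunc_mat_def riordan_mat_def mat_one_n_def)

text \<open>Stated with \<open>Suc 0\<close>, the simp normal form of \<open>1 :: nat\<close>.\<close>
lemma riordan_trunc_entry_1_0: "1 \<le> n \<Longrightarrow> riordan_trunc n p (Suc 0) 0 = fst p $ Suc 0"
  by (simp add: trunc_mat_def riordan_mat_def)

lemma TSR_simps [simp]:
  "carrier (TSR n) = riordan_trunc n ` SR_carrier" "mult (TSR n) = mat_mult_n n" "one (TSR n) = mat_one_n n"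
  unfolding TSR_def Setcompr_eq_image by simp_all

lemma TSA_eq: "TSA n = (TSR n)\<lparr>carrier := riordan_trunc n ` SA_carrier\<rparr>"
  unfolding TSA_def Setcompr_eq_image ..

lemma TSA_simps [simp]:
  "carrier (TSA n) = riordan_trunc n ` SA_carrier" "mult (TSA n) = mat_mult_n n" "one (TSA n) = mat_one_n n"
  by (simp_all add: TSA_eq)

lemma riordan_trunc_hom:
  "riordan_trunc n \<in> hom (SR :: ('a::comm_ring_1 fps \<times> 'a fps) monoid) (TSR n)"
  by (auto simp: hom_def riordan_trunc_mult)

lemma group_TSR: "group (TSR n :: (nat \<Rightarrow> nat \<Rightarrow> 'a::comm_ring_1) monoid)"
proof -
  have "(TSR n)\<lparr>carrier := riordan_trunc n ` carrier SR, one := riordan_trunc n \<one>\<^bsub>SR\<^esub>\<rparr>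
      = (TSR n :: (nat \<Rightarrow> nat \<Rightarrow> 'a) monoid)"
    unfolding TSR_def Setcompr_eq_image by (simp add: riordan_trunc_one)
  then show ?thesis
    using group.hom_imp_img_group[OF group_SR riordan_trunc_hom] by metis
qed

lemma group_hom_riordan_trunc:
  "group_hom (SR :: ('a::comm_ring_1 fps \<times> 'a fps) monoid) (TSR n) (riordan_trunc n)"
  by (intro group_hom.intro group_hom_axioms.intro group_SR group_TSR riordan_trunc_hom)

lemma derived_TSR:
  "gamma2 (TSR n :: (nat \<Rightarrow> nat \<Rightarrow> 'a::comm_ring_1) monoid)
     = riordan_trunc n ` gamma2 (SR :: ('a fps \<times> 'a fps) monoid)"
  using group_hom.derived_img[OF group_hom_riordan_trunc, of "carrier SR" n] by simp

lemma group_TSA: "group (TSA n :: (nat \<Rightarrow> nat \<Rightarrow> 'a::comm_ring_1) monoid)"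
proof -
  have "subgroup (riordan_trunc n ` SA_carrier) (TSR n :: (nat \<Rightarrow> nat \<Rightarrow> 'a) monoid)"
    by (rule group_hom.subgroup_img_is_subgroup[OF group_hom_riordan_trunc subgroup_SA])
  then show ?thesis
    unfolding TSA_eq by (rule subgroup.subgroup_is_group[OF _ group_TSR])
qed

lemma TSA_entry_1_0_hom:
  assumes "1 \<le> n"
  shows "(\<lambda>M. M 1 0) \<in> hom (TSA n :: (nat \<Rightarrow> nat \<Rightarrow> 'a::comm_ring_1) monoid) additive_group"
proof (rule homI)
  fix M N :: "nat \<Rightarrow> nat \<Rightarrow> 'a"
  assume "M \<in> carrier (TSA n)" and "N \<in> carrier (TSA n)"
  then obtain p q where p: "p \<in> SA_carrier" "M = riordan_trunc n p"
    and q: "q \<in> SA_carrier" "N = riordan_trunc n q"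
    by auto
  have "fst (riordan_mult p q) $ 1 = fst p $ 1 + fst q $ 1"
    using p q SA_subset_SR riordan_coeff1_hom by (auto simp: hom_def)
  then show "(M \<otimes>\<^bsub>TSA n\<^esub> N) 1 0 = M 1 0 \<otimes>\<^bsub>additive_group\<^esub> N 1 0"
    using p q SA_subset_SR assms by (auto simp: riordan_trunc_mult[symmetric] riordan_trunc_entry_1_0)
qed simp

lemma kernel_TSA_entry_1_0:
  assumes "1 \<le> n"
  shows "kernel (TSA n :: (nat \<Rightarrow> nat \<Rightarrow> 'a::comm_ring_1) monoid) additive_group (\<lambda>M. M 1 0)
    = carrier (TSA n) \<inter> gamma2 (TSR n)"
proof (intro equalityI subsetI)
  fix M :: "nat \<Rightarrow> nat \<Rightarrow> 'a"
  assume "M \<in> kernel (TSA n) additive_group (\<lambda>M. M 1 0)"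
  then obtain p :: "'a fps \<times> 'a fps" where p: "p \<in> SA_carrier" "M = riordan_trunc n p" "fst p $ 1 = 0"
    using assms by (auto simp: kernel_def riordan_trunc_entry_1_0)
  then have "p \<in> gamma2 SR"
    using A1_subset_derived_SR by (auto simp: SA_carrier_iff A1_carrier_iff)
  with p show "M \<in> carrier (TSA n) \<inter> gamma2 (TSR n)"
    unfolding derived_TSR by simp
next
  fix M :: "nat \<Rightarrow> nat \<Rightarrow> 'a"
  assume "M \<in> carrier (TSA n) \<inter> gamma2 (TSR n)"
  then obtain q :: "'a fps \<times> 'a fps" where "M \<in> carrier (TSA n)" "q \<in> gamma2 SR" "M = riordan_trunc n q"
    unfolding derived_TSR by blast
  then show "M \<in> kernel (TSA n) additive_group (\<lambda>M. M 1 0)"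
    using derived_SR_coeff1 assms by (simp add: kernel_def riordan_trunc_entry_1_0)
qed

lemma TSA_Mod_derived_iso_additive_group:
  assumes "1 \<le> n"
  shows "(TSA n :: (nat \<Rightarrow> nat \<Rightarrow> 'a::comm_ring_1) monoid) Mod (carrier (TSA n) \<inter> gamma2 (TSR n))
    \<cong> (additive_group :: 'a monoid)"
proof -
  interpret group_hom "TSA n :: (nat \<Rightarrow> nat \<Rightarrow> 'a) monoid" additive_group "\<lambda>M. M 1 0"
    using group_TSA group_additive_group TSA_entry_1_0_hom[OF assms]
    by (auto simp: group_hom_def group_hom_axioms_def)
  have "(\<lambda>M. M 1 0) ` carrier (TSA n :: (nat \<Rightarrow> nat \<Rightarrow> 'a) monoid) = carrier additive_group"
    using SA_coeff1_surj assms by (simp add: image_image riordan_trunc_entry_1_0)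
  from FactGroup_iso[OF this] show ?thesis
    unfolding kernel_TSA_entry_1_0[OF assms] .
qed

definition lower_shear :: "'a::{zero,one} \<Rightarrow> nat \<Rightarrow> nat \<Rightarrow> 'a" where
  "lower_shear \<alpha> = (\<lambda>i j. if i = 0 \<and> j = 0 then 1 else if i = 1 \<and> j = 0 then \<alpha>
                          else if i = 1 \<and> j = 1 then 1 else 0)"

lemma riordan_trunc_1_SA: "p \<in> SA_carrier \<Longrightarrow> riordan_trunc 1 p = lower_shear (fst p $ 1)"
  by (auto simp: SA_carrier_iff trunc_mat_def riordan_mat_def lower_shear_def le_Suc_eq fun_eq_iff)

lemma carrier_TSA_1: "carrier (TSA 1 :: (nat \<Rightarrow> nat \<Rightarrow> 'a::comm_ring_1) monoid) = range lower_shear"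
proof -
  have "riordan_trunc 1 ` SA_carrier = lower_shear ` (\<lambda>p. fst p $ 1) ` (SA_carrier :: ('a fps \<times> 'a fps) set)"
    unfolding image_image by (intro image_cong refl riordan_trunc_1_SA)
  then show ?thesis
    by (simp add: SA_coeff1_surj del: One_nat_def)
qed

lemma lower_shear_add:
  "lower_shear (a + b) = mat_mult_n 1 (lower_shear a) (lower_shear (b :: 'a::comm_ring_1))"
  by (auto simp: mat_mult_n_def lower_shear_def fun_eq_iff le_Suc_eq)

lemma lower_shear_iso: "lower_shear \<in> iso (additive_group :: 'a::comm_ring_1 monoid) (TSA 1)"
proof (rule isoI)
  show "lower_shear \<in> hom (additive_group :: 'a monoid) (TSA 1)"
  proof (rule homI)
    show "lower_shear a \<in> carrier (TSA 1)" for a :: 'a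
      unfolding carrier_TSA_1 by simp
    show "lower_shear (a \<otimes>\<^bsub>additive_group\<^esub> b) = lower_shear a \<otimes>\<^bsub>TSA 1\<^esub> lower_shear b" for a b :: 'a
      by (simp add: lower_shear_add del: One_nat_def)
  qed
  have "inj (lower_shear :: 'a \<Rightarrow> _)"
    by (rule injI) (metis lower_shear_def one_neq_zero)
  then show "bij_betw lower_shear (carrier additive_group) (carrier (TSA 1 :: (nat \<Rightarrow> nat \<Rightarrow> 'a) monoid))"
    unfolding carrier_TSA_1 bij_betw_def by simp
qed

theorem corollary2:
  fixes n :: nat
  assumes "n \<ge> 1"
  shows "((TSA n :: (nat \<Rightarrow> nat \<Rightarrow> 'a::comm_ring_1) monoid)
            Mod (carrier (TSA n) \<inter> gamma2 (TSR n)) \<cong> (TSA 1 :: (nat \<Rightarrow> nat \<Rightarrow> 'a) monoid))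
    \<and> (carrier (TSA 1 :: (nat \<Rightarrow> nat \<Rightarrow> 'a) monoid) =
           {(\<lambda>i j. if i = 0 \<and> j = 0 then 1 else if i = 1 \<and> j = 0 then \<alpha>
                    else if i = 1 \<and> j = 1 then 1 else 0) | \<alpha>. True})
    \<and> ((TSA 1 :: (nat \<Rightarrow> nat \<Rightarrow> 'a) monoid) \<cong> (additive_group :: 'a monoid))
    \<and> ((SA :: ('a fps \<times> 'a fps) monoid) Mod (carrier SA \<inter> gamma2 SR)
           = (SA :: ('a fps \<times> 'a fps) monoid) Mod A1_carrier)
    \<and> ((SA :: ('a fps \<times> 'a fps) monoid) Mod A1_carrier \<cong> (TSA 1 :: (nat \<Rightarrow> nat \<Rightarrow> 'a) monoid))"
proof (intro conjI)
  have additive_iso_TSA_1: "(additive_group :: 'a monoid) \<cong> (TSA 1 :: (nat \<Rightarrow> nat \<Rightarrow> 'a) monoid)"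
    by (rule is_isoI[OF lower_shear_iso])
  show "(TSA n :: (nat \<Rightarrow> nat \<Rightarrow> 'a) monoid) Mod (carrier (TSA n) \<inter> gamma2 (TSR n))
    \<cong> (TSA 1 :: (nat \<Rightarrow> nat \<Rightarrow> 'a) monoid)"
    using TSA_Mod_derived_iso_additive_group[OF assms] additive_iso_TSA_1 by (rule iso_trans)
  show "carrier (TSA 1 :: (nat \<Rightarrow> nat \<Rightarrow> 'a) monoid) =
           {(\<lambda>i j. if i = 0 \<and> j = 0 then 1 else if i = 1 \<and> j = 0 then \<alpha>
                    else if i = 1 \<and> j = 1 then 1 else 0) | \<alpha>. True}"
    unfolding carrier_TSA_1 lower_shear_def by blast
  show "(TSA 1 :: (nat \<Rightarrow> nat \<Rightarrow> 'a) monoid) \<cong> (additive_group :: 'a monoid)"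
    by (rule group.iso_sym[OF group_additive_group additive_iso_TSA_1])
  show "(SA :: ('a fps \<times> 'a fps) monoid) Mod (carrier SA \<inter> gamma2 SR) = SA Mod A1_carrier"
    by (simp only: SA_inter_derived_SR)
  show "(SA :: ('a fps \<times> 'a fps) monoid) Mod A1_carrier \<cong> (TSA 1 :: (nat \<Rightarrow> nat \<Rightarrow> 'a) monoid)"
    using SA_Mod_A1_iso_additive_group additive_iso_TSA_1 by (rule iso_trans)
qed

end
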